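(* Let $k$ be a positive integer and let $\mathcal{A}$ be a family of $3$-element subsets of $[k]=\{1,\dots,k\}$ with the following property: whenever $[k]=R_1\cup R_2\cup R_3$ is a partition of $[k]$ into three non-empty sets, there exists $A\in\mathcal{A}$ with $A\cap R_i\neq\emptyset$ for $i=1,2,3$. Then $|\mathcal{A}|\geq \frac{k(k-2)}{3}$. *)

theory Defs
  imports Complex_Main
begin

end

theory Submission
  imports Defs
begin

text \<open>Fix a vertex x. Growing a set S of other vertices one at a time, the partition
  {x}, S, V - {x} - S is rainbow-covered by some triple {x, a, b} with a in S and b outside;
  adding b to S captures this new triple. Hence after reaching S = V - {x} at least
  |V| - 2 triples contain x, and double counting incidences gives 3|F| \<ge> |V|(|V| - 2).\<close>

definition rainbow_cover :: "'a set \<Rightarrow> 'a set set \<Rightarrow> bool" where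
  "rainbow_cover V F \<longleftrightarrow>
    (\<forall>R1 R2 R3. R1 \<noteq> {} \<and> R2 \<noteq> {} \<and> R3 \<noteq> {} \<and>
       R1 \<inter> R2 = {} \<and> R1 \<inter> R3 = {} \<and> R2 \<inter> R3 = {} \<and> R1 \<union> R2 \<union> R3 = V \<longrightarrow>
       (\<exists>A\<in>F. A \<inter> R1 \<noteq> {} \<and> A \<inter> R2 \<noteq> {} \<and> A \<inter> R3 \<noteq> {}))"

lemma sum_card_incidences:
  assumes "finite V" "finite F" "\<forall>A\<in>F. A \<subseteq> V"
  shows "(\<Sum>x\<in>V. card {A\<in>F. x \<in> A}) = (\<Sum>A\<in>F. card A)"
proof -
  have "(\<Sum>x\<in>V. card {A\<in>F. x \<in> A}) = (\<Sum>x\<in>V. \<Sum>A\<in>F. if x \<in> A then 1 else 0)"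
    using assms(2) by (simp add: sum.If_cases Int_def)
  also have "\<dots> = (\<Sum>A\<in>F. \<Sum>x\<in>V. if x \<in> A then 1 else 0)"
    by (rule sum.swap)
  also have "\<dots> = (\<Sum>A\<in>F. card A)"
  proof (rule sum.cong)
    fix A assume "A \<in> F"
    then have "V \<inter> A = A" using assms(3) by blast
    then show "(\<Sum>x\<in>V. if x \<in> A then 1 else 0) = card A"
      using assms(1) by (simp add: sum.If_cases)
  qed simp
  finally show ?thesis .
qed

lemma rainbow_cover_triple_through:
  assumes cover: "rainbow_cover V F"
    and triples: "\<forall>A\<in>F. card A = 3"
    and x: "x \<in> V" and S: "S \<subseteq> V - {x}" "S \<noteq> {}" "V - {x} - S \<noteq> {}"
  obtains a b where "{x, a, b} \<in> F" "a \<in> S" "b \<in> V - {x} - S"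
proof -
  obtain A a b where A: "A \<in> F" "x \<in> A" "a \<in> A" "a \<in> S" "b \<in> A" "b \<in> V - {x} - S"
    using cover[unfolded rainbow_cover_def, rule_format, of "{x}" S "V - {x} - S"] x S
    by blast
  have "x \<noteq> a" "x \<noteq> b" "a \<noteq> b" using A S(1) by auto
  then have "card {x, a, b} = 3" by simp
  moreover have "{x, a, b} \<subseteq> A" "card A = 3" using A triples by auto
  ultimately have "A = {x, a, b}"
    by (metis card.infinite card_subset_eq zero_neq_numeral)
  with A that show ?thesis by blast
qed

lemma rainbow_cover_link_growth:
  assumes fin: "finite F"
    and cover: "rainbow_cover V F" and triples: "\<forall>A\<in>F. card A = 3"
    and x: "x \<in> V" and "1 \<le> m" "m < card V"
  shows "\<exists>S. S \<subseteq> V - {x} \<and> card S = m \<and> m - 1 \<le> card {A\<in>F. x \<in> A \<and> A \<subseteq> insert x S}"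
  using \<open>1 \<le> m\<close> \<open>m < card V\<close>
proof (induction m rule: dec_induct)
  case base
  have "card (V - {x}) \<noteq> 0" using base x by simp
  then obtain y where "y \<in> V - {x}" by (metis card.empty ex_in_conv)
  then show ?case by (intro exI[of _ "{y}"]) auto
next
  case (step m)
  then obtain S where S: "S \<subseteq> V - {x}" "card S = m"
      "m - 1 \<le> card {A\<in>F. x \<in> A \<and> A \<subseteq> insert x S}"
    by auto
  have finV: "finite V" using step.prems by (metis card.infinite not_less_zero)
  have "S \<noteq> {}" using S(2) step.hyps by auto
  moreover have "V - {x} - S \<noteq> {}"
  proof
    assume "V - {x} - S = {}"
    then have "S = V - {x}" using S(1) by blast
    then show False using S(2) step.prems x finV by simp
  qed
  ultimately obtain a b where ab: "{x, a, b} \<in> F" "a \<in> S" "b \<in> V - {x} - S"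
    using rainbow_cover_triple_through[OF cover triples x S(1)] by blast
  let ?link = "\<lambda>S. {A\<in>F. x \<in> A \<and> A \<subseteq> insert x S}"
  have new: "{x, a, b} \<notin> ?link S"
    using ab by auto
  have "insert {x, a, b} (?link S) \<subseteq> ?link (insert b S)"
    using ab by auto
  then have "card (insert {x, a, b} (?link S)) \<le> card (?link (insert b S))"
    using fin by (intro card_mono) auto
  then have "card (?link S) < card (?link (insert b S))"
    using new fin by simp
  moreover have "card (insert b S) = Suc m"
    using S(1,2) ab(3) finV by (simp add: finite_subset)
  ultimately show ?case
    using S ab(3) by (intro exI[of _ "insert b S"]) auto
qed

lemma rainbow_cover_degree:
  assumes fin: "finite F"
    and cover: "rainbow_cover V F" and triples: "\<forall>A\<in>F. card A = 3"
    and x: "x \<in> V" and "2 \<le> card V"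
  shows "card V - 2 \<le> card {A\<in>F. x \<in> A}"
proof -
  have "1 \<le> card V - 1" "card V - 1 < card V" using \<open>2 \<le> card V\<close> by auto
  then obtain S where "card V - 1 - 1 \<le> card {A\<in>F. x \<in> A \<and> A \<subseteq> insert x S}"
    using rainbow_cover_link_growth[OF fin cover triples x] by blast
  then have "card V - 2 \<le> card {A\<in>F. x \<in> A \<and> A \<subseteq> insert x S}"
    by simp
  also have "\<dots> \<le> card {A\<in>F. x \<in> A}"
    using fin by (intro card_mono) auto
  finally show ?thesis .
qed

theorem rainbow_cover_card_lower_bound:
  assumes "finite V" "rainbow_cover V F" "\<forall>A\<in>F. A \<subseteq> V \<and> card A = 3"
  shows "card V * (card V - 2) \<le> 3 * card F"
proof (cases "card V < 2")
  case False
  have fin: "finite F"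
    using assms(1,3) by (intro finite_subset[of F "Pow V"]) auto
  have "card V * (card V - 2) = (\<Sum>x\<in>V. card V - 2)"
    by simp
  also have "\<dots> \<le> (\<Sum>x\<in>V. card {A\<in>F. x \<in> A})"
    using rainbow_cover_degree[OF fin assms(2)] assms(3) False
    by (intro sum_mono) auto
  also have "\<dots> = (\<Sum>A\<in>F. card A)"
    using sum_card_incidences[OF assms(1) fin] assms(3) by blast
  also have "\<dots> = 3 * card F"
    using assms(3) by simp
  finally show ?thesis .
qed auto

theorem lemma1:
  fixes k :: nat and \<A> :: "nat set set"
  assumes "k > 0"
    and "\<forall>A\<in>\<A>. A \<subseteq> {1..k} \<and> card A = 3"
    and "\<forall>R1 R2 R3. R1 \<noteq> {} \<and> R2 \<noteq> {} \<and> R3 \<noteq> {} \<and>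
           R1 \<inter> R2 = {} \<and> R1 \<inter> R3 = {} \<and> R2 \<inter> R3 = {} \<and>
           R1 \<union> R2 \<union> R3 = {1..k} \<longrightarrow>
           (\<exists>A\<in>\<A>. A \<inter> R1 \<noteq> {} \<and> A \<inter> R2 \<noteq> {} \<and> A \<inter> R3 \<noteq> {})"
  shows "real (card \<A>) \<ge> real k * (real k - 2) / 3"
proof (cases "k = 1")
  case False
  have "k * (k - 2) \<le> 3 * card \<A>"
    using rainbow_cover_card_lower_bound[of "{1..k}" \<A>] assms(2,3)
    by (simp add: rainbow_cover_def)
  then have "real (k * (k - 2)) \<le> real (3 * card \<A>)"
    by (rule of_nat_mono)
  then have "real k * (real k - 2) \<le> 3 * real (card \<A>)"
    using False assms(1) by (simp add: of_nat_diff)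
  then show ?thesis by simp
qed simp

end
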